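(* Let $\Phi$ be a dictionary with coherence $\mu$ and Babel function $\mu_1$, let $m\ge1$ with $m<\tfrac12(\mu^{-1}+1)$, let $y=\Phi x^*$ be an $m$-sparse signal, and let $\beta>0$. Then every iterate $x_k$ of the Frank-Wolfe algorithm for Problem (P$_\beta$) satisfies $$\|x_k\|_1\le 2\|y\|_2\sqrt{\frac{m}{1-\mu_1(m-1)}}.$$
   Context: A dictionary is a matrix $\Phi=[\varphi_1,\dots,\varphi_n]\in\mathbb{R}^{d\times n}$ whose columns (atoms) satisfy $\|\varphi_i\|_2=1$. Its coherence is $\mu=\max_{j\neq k}|\langle\varphi_j,\varphi_k\rangle|$, and its Babel function is $\mu_1(p)=\max_{|\Lambda|=p}\max_{i\notin\Lambda}\sum_{j\in\Lambda}|\langle\varphi_i,\varphi_j\rangle|$ for $p\ge1$, with $\mu_1(0)=0$. A signal $y\in\mathbb{R}^d$ is $m$-sparse if $y=\Phi x^*$ for some $x^*\in\mathbb{R}^n$ with at most $m$ nonzero entries. Problem (P$_\beta$): minimize $f(x)=\tfrac12\|y-\Phi x\|_2^2$ over $B_1(\beta)=\{x\in\mathbb{R}^n:\|x\|_1\le\beta\}$. Frank-Wolfe algorithm for (P$_\beta$): set $x_0=0$. For $k=0,1,2,\dots$: let $r_k=y-\Phi x_k$; choose $i_k\in\arg\max_{i}|\langle\varphi_i,r_k\rangle|$ (any maximizer); set $s_k=\operatorname{sign}(\langle\varphi_{i_k},r_k\rangle)\,\beta\, e_{i_k}$ ($e_i$ the canonical basis vectors, $\operatorname{sign}(0)\in\{\pm1\}$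 arbitrary); choose $\gamma_k\in\arg\min_{\gamma\in[0,1]}\|y-\Phi(x_k+\gamma(s_k-x_k))\|_2^2$; set $x_{k+1}=x_k+\gamma_k(s_k-x_k)$. *)

theory Defs
  imports "HOL-Analysis.Analysis"
begin

definition dict_apply :: "('n::finite \<Rightarrow> real^'d) \<Rightarrow> ('n \<Rightarrow> real) \<Rightarrow> real^'d" where
  "dict_apply Phi x = (\<Sum>i\<in>UNIV. x i *\<^sub>R Phi i)"

definition l1norm :: "('n::finite \<Rightarrow> real) \<Rightarrow> real" where
  "l1norm x = (\<Sum>i\<in>UNIV. \<bar>x i\<bar>)"

text \<open>Coherence: maximum of absolute inner products of distinct atoms
  (convention: 0 if there is only one atom).\<close>
definition coherence :: "('n::finite \<Rightarrow> real^'d) \<Rightarrow> real" where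
  "coherence Phi = Max ({\<bar>Phi j \<bullet> Phi k\<bar> | j k. j \<noteq> k} \<union> {0})"

definition babel :: "('n::finite \<Rightarrow> real^'d) \<Rightarrow> nat \<Rightarrow> real" where
  "babel Phi p = (if p = 0 then 0 else
     Max {(\<Sum>j\<in>L. \<bar>Phi i \<bullet> Phi j\<bar>) | L i. card L = p \<and> i \<notin> L})"

text \<open>One Frank-Wolfe step for minimising 1/2 ||y - Phi x||^2 over the l1-ball of radius beta,
  with arbitrary choice of the maximiser, of the sign when the inner product is 0,
  and of the exact line-search minimiser.\<close>
definition fw_step :: "('n::finite \<Rightarrow> real^'d) \<Rightarrow> real^'d \<Rightarrow> real \<Rightarrow> ('n \<Rightarrow> real) \<Rightarrow> ('n \<Rightarrow> real) \<Rightarrow> bool" where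
  "fw_step Phi y beta xk xk' \<longleftrightarrow>
     (let r = y - dict_apply Phi xk in
      \<exists>i \<sigma> \<gamma>.
        (\<forall>j. \<bar>Phi j \<bullet> r\<bar> \<le> \<bar>Phi i \<bullet> r\<bar>) \<and>
        \<sigma> \<in> {-1, 1} \<and> (Phi i \<bullet> r \<noteq> 0 \<longrightarrow> \<sigma> = sgn (Phi i \<bullet> r)) \<and>
        (let s = (\<lambda>j. if j = i then \<sigma> * beta else 0) in
          \<gamma> \<in> {0..1} \<and>
          (\<forall>g\<in>{0..1}. (norm (y - dict_apply Phi (\<lambda>j. xk j + \<gamma> * (s j - xk j))))\<^sup>2
                       \<le> (norm (y - dict_apply Phi (\<lambda>j. xk j + g * (s j - xk j))))\<^sup>2) \<and>
          xk' = (\<lambda>j. xk j + \<gamma> * (s j - xk j))))"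

definition fw_iterates :: "('n::finite \<Rightarrow> real^'d) \<Rightarrow> real^'d \<Rightarrow> real \<Rightarrow> (nat \<Rightarrow> 'n \<Rightarrow> real) \<Rightarrow> bool" where
  "fw_iterates Phi y beta xs \<longleftrightarrow>
     xs 0 = (\<lambda>_. 0) \<and> (\<forall>k. fw_step Phi y beta (xs k) (xs (Suc k)))"

end

theory Submission
  imports Defs
begin

text \<open>Frank-Wolfe never leaves the support \<open>S\<close> of \<open>x\<^sup>*\<close>: while the residual
  \<open>r = \<Phi>(x\<^sup>* - x\<^sub>k)\<close> is nonzero, the coherence condition \<open>(2|S| - 1)\<mu> < 1\<close>
  makes some atom of \<open>S\<close> strictly more correlated with \<open>r\<close> than every atom outside \<open>S\<close>,
  and once \<open>r = 0\<close> the exact line search cannot move. The line search also makes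
  \<open>\<parallel>y - \<Phi>x\<^sub>k\<parallel>\<close> non-increasing, so \<open>\<parallel>\<Phi>x\<^sub>k\<parallel> \<le> 2\<parallel>y\<parallel>\<close>. For \<open>x\<close> supported on
  \<open>m\<close> atoms, Gershgorin's bound in terms of the Babel function gives
  \<open>\<parallel>\<Phi>x\<parallel>\<^sup>2 \<ge> (1 - \<mu>\<^sub>1(m - 1)) \<parallel>x\<parallel>\<^sub>2\<^sup>2\<close>, and \<open>\<parallel>x\<parallel>\<^sub>1 \<le> \<surd>m \<parallel>x\<parallel>\<^sub>2\<close> finishes.\<close>

lemma dict_apply_zero [simp]: "dict_apply Phi (\<lambda>_. 0) = 0"
  by (simp add: dict_apply_def)

lemma dict_apply_diff: "dict_apply Phi (\<lambda>l. a l - b l) = dict_apply Phi a - dict_apply Phi b"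
  by (simp add: dict_apply_def scaleR_diff_left sum_subtractf)

lemma dict_apply_supported:
  assumes "{l. x l \<noteq> 0} \<subseteq> T"
  shows "dict_apply Phi x = (\<Sum>l\<in>T. x l *\<^sub>R Phi l)"
  unfolding dict_apply_def by (rule sum.mono_neutral_right) (use assms in auto)

lemma inner_dict_apply_supported:
  assumes "{l. x l \<noteq> 0} \<subseteq> T"
  shows "Phi j \<bullet> dict_apply Phi x = (\<Sum>l\<in>T. x l * (Phi j \<bullet> Phi l))"
  by (simp add: dict_apply_supported[OF assms] inner_sum_right)

lemma inner_unit_self: "norm v = 1 \<Longrightarrow> v \<bullet> v = 1"
  by (metis power2_norm_eq_inner power_one)

lemma exists_max_abs_coefficient:
  fixes d :: "'n::finite \<Rightarrow> real"
  assumes "d l \<noteq> 0"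
  obtains j where "d j \<noteq> 0" "\<And>l. \<bar>d l\<bar> \<le> \<bar>d j\<bar>"
proof -
  have "Max (range (\<lambda>l. \<bar>d l\<bar>)) \<in> range (\<lambda>l. \<bar>d l\<bar>)" by (rule Max_in) simp_all
  then obtain j where j: "\<bar>d j\<bar> = Max (range (\<lambda>l. \<bar>d l\<bar>))" by (metis rangeE)
  then have "\<bar>d l\<bar> \<le> \<bar>d j\<bar>" for l by simp
  with assms show thesis by (intro that[of j]) force+
qed

lemma finite_coherence_values:
  "finite ({\<bar>Phi j \<bullet> Phi k\<bar> | j k. (j::'n::finite) \<noteq> k} \<union> {0})"
proof -
  have "{\<bar>Phi j \<bullet> Phi k\<bar> | j k. j \<noteq> k} \<subseteq> range (\<lambda>(j, k). \<bar>Phi j \<bullet> Phi k\<bar>)" by auto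
  then show ?thesis by (simp add: finite_subset)
qed

lemma abs_inner_le_coherence:
  fixes Phi :: "'n::finite \<Rightarrow> real^'d"
  assumes "j \<noteq> k"
  shows "\<bar>Phi j \<bullet> Phi k\<bar> \<le> coherence Phi"
  unfolding coherence_def by (rule Max_ge[OF finite_coherence_values]) (use assms in auto)

lemma coherence_nonneg: "0 \<le> coherence (Phi :: 'n::finite \<Rightarrow> real^'d)"
  unfolding coherence_def by (rule Max_ge[OF finite_coherence_values]) auto

lemma finite_babel_values:
  "finite {(\<Sum>j\<in>L. \<bar>Phi i \<bullet> Phi j\<bar>) | L i. card L = p \<and> (i::'n::finite) \<notin> L}"
proof -
  have "{(\<Sum>j\<in>L. \<bar>Phi i \<bullet> Phi j\<bar>) | L i. card L = p \<and> i \<notin> L}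
      \<subseteq> range (\<lambda>(L, i). \<Sum>j\<in>L. \<bar>Phi i \<bullet> Phi j\<bar>)" by auto
  then show ?thesis by (rule finite_subset) simp
qed

lemma sum_abs_inner_le_babel:
  fixes Phi :: "'n::finite \<Rightarrow> real^'d"
  assumes "i \<notin> L" "card L \<le> p" "p < CARD('n)"
  shows "(\<Sum>j\<in>L. \<bar>Phi i \<bullet> Phi j\<bar>) \<le> babel Phi p"
proof (cases "p = 0")
  case True
  with assms show ?thesis by (simp add: babel_def)
next
  case False
  have "card (insert i L) = card L + 1" using assms(1) by simp
  then have "p - card L \<le> card (UNIV - insert i L)"
    using assms by (simp add: card_Diff_subset)
  then obtain C where C: "C \<subseteq> UNIV - insert i L" "card C = p - card L"
    by (meson obtain_subset_with_card_n)
  have card_LC: "card (L \<union> C) = p"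
    using C assms(2) by (subst card_Un_disjoint) auto
  have "(\<Sum>j\<in>L. \<bar>Phi i \<bullet> Phi j\<bar>) \<le> (\<Sum>j\<in>L \<union> C. \<bar>Phi i \<bullet> Phi j\<bar>)"
    by (rule sum_mono2) auto
  also have "\<dots> \<le> babel Phi p"
  proof -
    have "i \<notin> L \<union> C" using assms(1) C(1) by blast
    with card_LC False show ?thesis
      unfolding babel_def by (auto intro!: Max_ge[OF finite_babel_values])
  qed
  finally show ?thesis .
qed

lemma babel_le_coherence:
  fixes Phi :: "'n::finite \<Rightarrow> real^'d"
  assumes "p < CARD('n)"
  shows "babel Phi p \<le> real p * coherence Phi"
proof (cases "p = 0")
  case True
  then show ?thesis by (simp add: babel_def)
next
  case False
  obtain i :: 'n where True by simp
  have "p \<le> card (UNIV - {i})" using assms by (simp add: card_Diff_singleton)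
  then obtain L where "L \<subseteq> UNIV - {i}" "card L = p" by (meson obtain_subset_with_card_n)
  then have nonempty: "{(\<Sum>j\<in>L. \<bar>Phi i \<bullet> Phi j\<bar>) | L i. card L = p \<and> i \<notin> L} \<noteq> {}" by blast
  have "(\<Sum>j\<in>L. \<bar>Phi i \<bullet> Phi j\<bar>) \<le> real p * coherence Phi" if "card L = p" "i \<notin> L" for L i
  proof -
    have "(\<Sum>j\<in>L. \<bar>Phi i \<bullet> Phi j\<bar>) \<le> (\<Sum>j\<in>L. coherence Phi)"
      by (rule sum_mono) (use that abs_inner_le_coherence in metis)
    with that show ?thesis by simp
  qed
  then show ?thesis
    unfolding babel_def using False by (auto intro!: Max.boundedI[OF finite_babel_values nonempty])
qed

lemma quadratic_form_ge_diagonally_dominant: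
  fixes G :: "'a \<Rightarrow> 'a \<Rightarrow> real"
  assumes S: "finite S"
    and sym: "\<And>i j. G i j = G j i"
    and diag: "\<And>i. i \<in> S \<Longrightarrow> G i i = 1"
    and rows: "\<And>i. i \<in> S \<Longrightarrow> (\<Sum>j\<in>S-{i}. \<bar>G i j\<bar>) \<le> b"
  shows "(1 - b) * (\<Sum>i\<in>S. (x i)\<^sup>2) \<le> (\<Sum>i\<in>S. \<Sum>j\<in>S. x i * x j * G i j)"
proof -
  define A where "A i j = (if i = j then 0 else \<bar>G i j\<bar>)" for i j
  have A_sym: "A i j = A j i" for i j unfolding A_def using sym[of i j] by auto
  have A_rows: "(\<Sum>j\<in>S. A i j) \<le> b" if "i \<in> S" for i
  proof -
    have "(\<Sum>j\<in>S. A i j) = (\<Sum>j\<in>S-{i}. \<bar>G i j\<bar>)"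
      unfolding sum.remove[OF S that] A_def by (simp, intro sum.cong) auto
    with rows[OF that] show ?thesis by simp
  qed
  \<comment> \<open>Off the diagonal, \<open>2 \<bar>x\<^sub>i x\<^sub>j\<bar> \<le> x\<^sub>i\<^sup>2 + x\<^sub>j\<^sup>2\<close>.\<close>
  have entry: "(if i = j then (x i)\<^sup>2 else 0) - A i j * (x i)\<^sup>2 / 2 - A i j * (x j)\<^sup>2 / 2
      \<le> x i * x j * G i j" if "i \<in> S" for i j
  proof (cases "i = j")
    case True
    then show ?thesis using diag[OF that] by (simp add: A_def power2_eq_square)
  next
    case False
    have "\<bar>G i j\<bar> * (2 * \<bar>x i\<bar> * \<bar>x j\<bar>) \<le> \<bar>G i j\<bar> * ((x i)\<^sup>2 + (x j)\<^sup>2)"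
      using sum_squares_bound[of "\<bar>x i\<bar>" "\<bar>x j\<bar>"] by (intro mult_left_mono) simp_all
    moreover have "- (\<bar>G i j\<bar> * (\<bar>x i\<bar> * \<bar>x j\<bar>)) \<le> x i * x j * G i j"
      by (metis abs_ge_minus_self abs_mult minus_le_iff mult.commute)
    ultimately show ?thesis using False by (simp add: A_def algebra_simps)
  qed
  have "(\<Sum>i\<in>S. \<Sum>j\<in>S. A i j * (x i)\<^sup>2) = (\<Sum>i\<in>S. (x i)\<^sup>2 * (\<Sum>j\<in>S. A i j))"
    by (simp add: sum_distrib_right mult.commute)
  also have "\<dots> \<le> (\<Sum>i\<in>S. (x i)\<^sup>2 * b)"
    by (intro sum_mono mult_left_mono A_rows) simp_all
  finally have off_diagonal: "(\<Sum>i\<in>S. \<Sum>j\<in>S. A i j * (x i)\<^sup>2) \<le> b * (\<Sum>i\<in>S. (x i)\<^sup>2)"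
    by (simp add: sum_distrib_left mult.commute)
  have off_diagonal_swap: "(\<Sum>i\<in>S. \<Sum>j\<in>S. A i j * (x j)\<^sup>2) = (\<Sum>i\<in>S. \<Sum>j\<in>S. A i j * (x i)\<^sup>2)"
    by (subst sum.swap) (simp add: A_sym)
  have lower: "(\<Sum>i\<in>S. \<Sum>j\<in>S. (if i = j then (x i)\<^sup>2 else 0) - A i j * (x i)\<^sup>2 / 2 - A i j * (x j)\<^sup>2 / 2)
      \<le> (\<Sum>i\<in>S. \<Sum>j\<in>S. x i * x j * G i j)"
    by (intro sum_mono entry)
  have "(\<Sum>i\<in>S. \<Sum>j\<in>S. (if i = j then (x i)\<^sup>2 else 0) - A i j * (x i)\<^sup>2 / 2 - A i j * (x j)\<^sup>2 / 2)
      = (\<Sum>i\<in>S. (x i)\<^sup>2) - (\<Sum>i\<in>S. \<Sum>j\<in>S. A i j * (x i)\<^sup>2) / 2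
        - (\<Sum>i\<in>S. \<Sum>j\<in>S. A i j * (x j)\<^sup>2) / 2"
    using S by (simp add: sum_subtractf sum_divide_distrib)
  with lower off_diagonal off_diagonal_swap show ?thesis by (simp add: algebra_simps)
qed

lemma norm_dict_apply_squared:
  assumes "{l. x l \<noteq> 0} \<subseteq> S"
  shows "(norm (dict_apply Phi x))\<^sup>2 = (\<Sum>i\<in>S. \<Sum>j\<in>S. x i * x j * (Phi i \<bullet> Phi j))"
proof -
  have "(norm (dict_apply Phi x))\<^sup>2 = (\<Sum>i\<in>S. x i * (Phi i \<bullet> dict_apply Phi x))"
    unfolding power2_norm_eq_inner
    by (subst (1) dict_apply_supported[OF assms]) (simp add: inner_sum_left)
  also have "\<dots> = (\<Sum>i\<in>S. \<Sum>j\<in>S. x i * x j * (Phi i \<bullet> Phi j))"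
    unfolding inner_dict_apply_supported[OF assms] by (simp add: sum_distrib_left mult.assoc)
  finally show ?thesis .
qed

lemma sum_squares_le_babel:
  fixes Phi :: "'n::finite \<Rightarrow> real^'d"
  assumes unit: "\<forall>i. norm (Phi i) = 1"
    and supp: "{l. x l \<noteq> 0} \<subseteq> S" and card_S: "card S \<le> m" and m: "m \<le> CARD('n)"
  shows "(1 - babel Phi (m - 1)) * (\<Sum>i\<in>S. (x i)\<^sup>2) \<le> (norm (dict_apply Phi x))\<^sup>2"
  unfolding norm_dict_apply_squared[OF supp]
proof (rule quadratic_form_ge_diagonally_dominant)
  show "Phi i \<bullet> Phi j = Phi j \<bullet> Phi i" for i j by (rule inner_commute)
  show "Phi i \<bullet> Phi i = 1" for i using unit by (simp add: inner_unit_self)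
  show "(\<Sum>j\<in>S - {i}. \<bar>Phi i \<bullet> Phi j\<bar>) \<le> babel Phi (m - 1)" if "i \<in> S" for i
  proof (rule sum_abs_inner_le_babel)
    have "0 < card S" using that by (auto simp: card_gt_0_iff)
    with card_S m show "card (S - {i}) \<le> m - 1" "m - 1 < CARD('n)"
      using card_Diff_singleton[OF that] by linarith+
  qed simp
qed simp

lemma l1norm_le_babel:
  fixes Phi :: "'n::finite \<Rightarrow> real^'d"
  assumes unit: "\<forall>i. norm (Phi i) = 1"
    and supp: "{l. x l \<noteq> 0} \<subseteq> S" and card_S: "card S \<le> m" and m: "m \<le> CARD('n)"
    and babel: "babel Phi (m - 1) < 1"
  shows "l1norm x \<le> sqrt (real m / (1 - babel Phi (m - 1))) * norm (dict_apply Phi x)"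
proof -
  define b where "b = babel Phi (m - 1)"
  have b: "0 < 1 - b" using babel by (simp add: b_def)
  have "l1norm x = (\<Sum>i\<in>S. \<bar>x i\<bar>)"
    unfolding l1norm_def by (rule sum.mono_neutral_right) (use supp in auto)
  then have "(l1norm x)\<^sup>2 \<le> (\<Sum>i\<in>S. (x i)\<^sup>2) * real (card S)"
    using sum_squared_le_sum_of_squares[of "\<lambda>i. \<bar>x i\<bar>" S] by simp
  also have "\<dots> \<le> (\<Sum>i\<in>S. (x i)\<^sup>2) * real m"
    using card_S by (intro mult_left_mono) (simp_all add: sum_nonneg)
  also have "\<dots> \<le> (norm (dict_apply Phi x))\<^sup>2 / (1 - b) * real m"
    using sum_squares_le_babel[OF unit supp card_S m] b
    by (intro mult_right_mono) (simp_all add: b_def pos_le_divide_eq mult.commute)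
  also have "\<dots> = (sqrt (real m / (1 - b)) * norm (dict_apply Phi x))\<^sup>2"
    using b by (simp add: power_mult_distrib)
  finally show ?thesis
    unfolding b_def by (rule power2_le_imp_le) (use b in \<open>simp add: b_def\<close>)
qed

lemma abs_inner_dict_apply_ge:
  fixes Phi :: "'n::finite \<Rightarrow> real^'d"
  assumes unit: "\<forall>i. norm (Phi i) = 1" and supp: "{l. d l \<noteq> 0} \<subseteq> T"
    and j: "j \<in> T" and max: "\<And>l. \<bar>d l\<bar> \<le> \<bar>d j\<bar>"
  shows "\<bar>d j\<bar> * (1 - (real (card T) - 1) * coherence Phi) \<le> \<bar>Phi j \<bullet> dict_apply Phi d\<bar>"
proof -
  define R where "R = (\<Sum>l\<in>T-{j}. d l * (Phi j \<bullet> Phi l))"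
  have "Phi j \<bullet> dict_apply Phi d = d j + R"
    unfolding R_def inner_dict_apply_supported[OF supp] sum.remove[OF finite j]
    using unit by (simp add: inner_unit_self)
  moreover have "\<bar>R\<bar> \<le> (\<Sum>l\<in>T-{j}. \<bar>d j\<bar> * coherence Phi)"
    unfolding R_def
    by (rule order_trans[OF sum_abs sum_mono], unfold abs_mult)
       (auto intro!: mult_mono max abs_inner_le_coherence)
  moreover have "card T \<ge> 1" using j by (metis card_0_eq empty_iff finite less_one not_le)
  then have "(\<Sum>l\<in>T-{j}. \<bar>d j\<bar> * coherence Phi) = (real (card T) - 1) * \<bar>d j\<bar> * coherence Phi"
    using j by (simp add: card_Diff_singleton of_nat_diff)
  ultimately show ?thesis by (simp add: algebra_simps abs_triangle_ineq2_sym)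
qed

lemma abs_inner_dict_apply_le:
  fixes Phi :: "'n::finite \<Rightarrow> real^'d"
  assumes supp: "{l. d l \<noteq> 0} \<subseteq> T" and i: "i \<notin> T" and bound: "\<And>l. \<bar>d l\<bar> \<le> M"
  shows "\<bar>Phi i \<bullet> dict_apply Phi d\<bar> \<le> real (card T) * M * coherence Phi"
proof -
  have "\<bar>Phi i \<bullet> dict_apply Phi d\<bar> \<le> (\<Sum>l\<in>T. \<bar>d l\<bar> * \<bar>Phi i \<bullet> Phi l\<bar>)"
    unfolding inner_dict_apply_supported[OF supp] abs_mult[symmetric] by (rule sum_abs)
  also have "\<dots> \<le> (\<Sum>l\<in>T. M * coherence Phi)"
    using i order_trans[OF abs_ge_zero bound]
    by (intro sum_mono mult_mono bound abs_inner_le_coherence) auto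
  finally show ?thesis by simp
qed

lemma exists_support_atom_more_correlated:
  fixes Phi :: "'n::finite \<Rightarrow> real^'d"
  assumes unit: "\<forall>i. norm (Phi i) = 1" and supp: "{l. d l \<noteq> 0} \<subseteq> T"
    and nonzero: "d l \<noteq> 0" and i: "i \<notin> T"
    and coh: "coherence Phi * (2 * real (card T) - 1) < 1"
  shows "\<exists>j\<in>T. \<bar>Phi i \<bullet> dict_apply Phi d\<bar> < \<bar>Phi j \<bullet> dict_apply Phi d\<bar>"
proof -
  obtain j where j: "d j \<noteq> 0" "\<And>l. \<bar>d l\<bar> \<le> \<bar>d j\<bar>"
    using exists_max_abs_coefficient[of d, OF nonzero] by blast
  have "j \<in> T" using j(1) supp by blast
  have "\<bar>Phi i \<bullet> dict_apply Phi d\<bar> \<le> \<bar>d j\<bar> * (real (card T) * coherence Phi)"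
    using abs_inner_dict_apply_le[OF supp i j(2)] by (simp add: algebra_simps)
  also have "\<dots> < \<bar>d j\<bar> * (1 - (real (card T) - 1) * coherence Phi)"
    using coh j(1) by (intro mult_strict_left_mono) (simp_all add: algebra_simps)
  also have "\<dots> \<le> \<bar>Phi j \<bullet> dict_apply Phi d\<bar>"
    by (rule abs_inner_dict_apply_ge[OF unit supp \<open>j \<in> T\<close> j(2)])
  finally show ?thesis using \<open>j \<in> T\<close> by blast
qed

lemma dict_apply_eq_zero_imp_zero:
  fixes Phi :: "'n::finite \<Rightarrow> real^'d"
  assumes unit: "\<forall>i. norm (Phi i) = 1" and supp: "{l. d l \<noteq> 0} \<subseteq> T"
    and coh: "(real (card T) - 1) * coherence Phi < 1"
    and zero: "dict_apply Phi d = 0"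
  shows "d = (\<lambda>_. 0)"
proof (rule ccontr)
  assume "d \<noteq> (\<lambda>_. 0)"
  then obtain l where "d l \<noteq> 0" by auto
  then obtain j where j: "d j \<noteq> 0" "\<And>l. \<bar>d l\<bar> \<le> \<bar>d j\<bar>"
    using exists_max_abs_coefficient by blast
  have "j \<in> T" using j(1) supp by blast
  have "0 < \<bar>d j\<bar> * (1 - (real (card T) - 1) * coherence Phi)"
    using coh j(1) by simp
  also have "\<dots> \<le> \<bar>Phi j \<bullet> dict_apply Phi d\<bar>"
    by (rule abs_inner_dict_apply_ge[OF unit supp \<open>j \<in> T\<close> j(2)])
  finally show False using zero by simp
qed

lemma fw_stepE:
  assumes "fw_step Phi y beta x x'"
  obtains i where "\<And>j. \<bar>Phi j \<bullet> (y - dict_apply Phi x)\<bar> \<le> \<bar>Phi i \<bullet> (y - dict_apply Phi x)\<bar>"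
    and "\<And>l. l \<noteq> i \<Longrightarrow> x l = 0 \<Longrightarrow> x' l = 0"
    and "norm (y - dict_apply Phi x') \<le> norm (y - dict_apply Phi x)"
proof -
  obtain i \<sigma> \<gamma> where
    argmax: "\<forall>j. \<bar>Phi j \<bullet> (y - dict_apply Phi x)\<bar> \<le> \<bar>Phi i \<bullet> (y - dict_apply Phi x)\<bar>" and
    line_search: "\<forall>g\<in>{0..1}.
      (norm (y - dict_apply Phi (\<lambda>j. x j + \<gamma> * ((if j = i then \<sigma> * beta else 0) - x j))))\<^sup>2
      \<le> (norm (y - dict_apply Phi (\<lambda>j. x j + g * ((if j = i then \<sigma> * beta else 0) - x j))))\<^sup>2" and
    x': "x' = (\<lambda>j. x j + \<gamma> * ((if j = i then \<sigma> * beta else 0) - x j))"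
    using assms unfolding fw_step_def Let_def by blast
  have "(norm (y - dict_apply Phi x'))\<^sup>2 \<le> (norm (y - dict_apply Phi x))\<^sup>2"
    using line_search[rule_format, of 0] unfolding x' by simp
  then have "norm (y - dict_apply Phi x') \<le> norm (y - dict_apply Phi x)"
    by (rule power2_le_imp_le) simp
  with argmax show thesis by (intro that[of i]) (auto simp: x')
qed

lemma fw_step_preserves_support:
  fixes Phi :: "'n::finite \<Rightarrow> real^'d"
  assumes unit: "\<forall>i. norm (Phi i) = 1"
    and y: "y = dict_apply Phi xstar" and supp_star: "{l. xstar l \<noteq> 0} \<subseteq> S"
    and coh: "coherence Phi * (2 * real (card S) - 1) < 1"
    and supp: "{l. x l \<noteq> 0} \<subseteq> S" and step: "fw_step Phi y beta x x'"
  shows "{l. x' l \<noteq> 0} \<subseteq> S"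
proof -
  obtain i where
    argmax: "\<And>j. \<bar>Phi j \<bullet> (y - dict_apply Phi x)\<bar> \<le> \<bar>Phi i \<bullet> (y - dict_apply Phi x)\<bar>" and
    keep_zero: "\<And>l. l \<noteq> i \<Longrightarrow> x l = 0 \<Longrightarrow> x' l = 0" and
    decrease: "norm (y - dict_apply Phi x') \<le> norm (y - dict_apply Phi x)"
    using fw_stepE[OF step] by blast
  show ?thesis
  proof (cases "i \<in> S")
    case True
    show ?thesis
    proof
      fix l assume "l \<in> {l. x' l \<noteq> 0}"
      with True supp keep_zero[of l] show "l \<in> S" by (cases "l = i") auto
    qed
  next
    case False
    have residual: "y - dict_apply Phi x = dict_apply Phi (\<lambda>l. xstar l - x l)"
      by (simp add: y dict_apply_diff)
    \<comment> \<open>An atom outside \<open>S\<close> is selected only once the residual vanishes; the line search then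
      stays among the solutions of \<open>\<Phi>x = y\<close>, and \<open>\<Phi>\<close> is injective on vectors supported on \<open>S \<union> {i}\<close>.\<close>
    have "(\<lambda>l. xstar l - x l) = (\<lambda>_. 0)"
    proof (rule ccontr)
      assume "(\<lambda>l. xstar l - x l) \<noteq> (\<lambda>_. 0)"
      then obtain l where nonzero: "xstar l - x l \<noteq> 0" by (meson ext)
      have "{l. xstar l - x l \<noteq> 0} \<subseteq> S"
        using supp supp_star by (smt (verit) mem_Collect_eq subset_iff)
      from exists_support_atom_more_correlated[OF unit this nonzero False coh]
      obtain j where "\<bar>Phi i \<bullet> (y - dict_apply Phi x)\<bar> < \<bar>Phi j \<bullet> (y - dict_apply Phi x)\<bar>"
        unfolding residual by blast
      with argmax[of j] show False by linarith
    qed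
    then have "dict_apply Phi x = y" using residual by simp
    with decrease have "dict_apply Phi x' = y" by simp
    with \<open>dict_apply Phi x = y\<close> have "dict_apply Phi (\<lambda>l. x' l - x l) = 0"
      by (simp add: dict_apply_diff)
    moreover have "{l. x' l - x l \<noteq> 0} \<subseteq> insert i S"
      using supp keep_zero by (smt (verit) insert_iff mem_Collect_eq subset_iff)
    moreover have "(real (card (insert i S)) - 1) * coherence Phi < 1"
    proof (cases "card S = 0")
      case True
      with False show ?thesis by simp
    next
      case nonempty: False
      have "real (card S) * coherence Phi \<le> (2 * real (card S) - 1) * coherence Phi"
        using nonempty coherence_nonneg[of Phi] by (intro mult_right_mono) (simp_all add: Suc_le_eq card_gt_0_iff)
      with coh False show ?thesis by (simp add: mult.commute)
    qed
    ultimately have "(\<lambda>l. x' l - x l) = (\<lambda>_. 0)"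
      by (intro dict_apply_eq_zero_imp_zero[OF unit])
    then have "x' = x" by (simp add: fun_eq_iff)
    with supp show ?thesis by simp
  qed
qed

lemma fw_iterates_support:
  fixes Phi :: "'n::finite \<Rightarrow> real^'d"
  assumes unit: "\<forall>i. norm (Phi i) = 1"
    and y: "y = dict_apply Phi xstar" and supp_star: "{l. xstar l \<noteq> 0} \<subseteq> S"
    and coh: "coherence Phi * (2 * real (card S) - 1) < 1"
    and fw: "fw_iterates Phi y beta xs"
  shows "{l. xs k l \<noteq> 0} \<subseteq> S"
proof (induction k)
  case 0
  then show ?case using fw by (simp add: fw_iterates_def)
next
  case (Suc k)
  have "fw_step Phi y beta (xs k) (xs (Suc k))" using fw by (simp add: fw_iterates_def)
  with Suc.IH show ?case by (rule fw_step_preserves_support[OF unit y supp_star coh])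
qed

lemma fw_iterates_residual_le:
  fixes Phi :: "'n::finite \<Rightarrow> real^'d"
  assumes "fw_iterates Phi y beta xs"
  shows "norm (y - dict_apply Phi (xs k)) \<le> norm y"
proof (induction k)
  case 0
  then show ?case using assms by (simp add: fw_iterates_def)
next
  case (Suc k)
  from assms have "fw_step Phi y beta (xs k) (xs (Suc k))" by (simp add: fw_iterates_def)
  then have "norm (y - dict_apply Phi (xs (Suc k))) \<le> norm (y - dict_apply Phi (xs k))"
    by (rule fw_stepE)
  with Suc.IH show ?case by simp
qed

theorem lemma2:
  fixes Phi :: "'n::finite \<Rightarrow> real^'d"
    and xstar :: "'n \<Rightarrow> real"
    and y :: "real^'d"
    and beta :: real
    and m :: nat
    and xs :: "nat \<Rightarrow> 'n \<Rightarrow> real"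
  assumes unit: "\<forall>i. norm (Phi i) = 1"
    and m_pos: "m \<ge> 1"
    and m_le: "m \<le> CARD('n)"
    and m_coh: "coherence Phi * (2 * real m - 1) < 1"
    and y_def: "y = dict_apply Phi xstar"
    and sparse: "card {i. xstar i \<noteq> 0} \<le> m"
    and beta_pos: "beta > 0"
    and fw: "fw_iterates Phi y beta xs"
  shows "\<forall>k. l1norm (xs k) \<le> 2 * norm y * sqrt (real m / (1 - babel Phi (m - 1)))"
proof
  fix k
  define S where "S = {i. xstar i \<noteq> 0}"
  have mu: "0 \<le> coherence Phi" by (rule coherence_nonneg)
  have "coherence Phi * (2 * real (card S) - 1) \<le> coherence Phi * (2 * real m - 1)"
    using sparse mu by (intro mult_left_mono) (simp_all add: S_def)
  with m_coh have coh_S: "coherence Phi * (2 * real (card S) - 1) < 1" by linarith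
  have "babel Phi (m - 1) \<le> real (m - 1) * coherence Phi"
    using m_pos m_le by (intro babel_le_coherence) linarith
  also have "\<dots> \<le> (2 * real m - 1) * coherence Phi"
    using m_pos mu by (intro mult_right_mono) auto
  finally have babel: "babel Phi (m - 1) < 1" using m_coh by (simp add: mult.commute)
  have supp: "{l. xs k l \<noteq> 0} \<subseteq> S"
    using fw_iterates_support[OF unit y_def _ coh_S fw] by (simp add: S_def)
  have "norm (dict_apply Phi (xs k)) \<le> norm y + norm (y - dict_apply Phi (xs k))"
    using norm_triangle_sub[of "dict_apply Phi (xs k)" y] by (simp add: norm_minus_commute)
  also have "\<dots> \<le> 2 * norm y" using fw_iterates_residual_le[OF fw] by simp
  finally have "norm (dict_apply Phi (xs k)) \<le> 2 * norm y" .
  then have "sqrt (real m / (1 - babel Phi (m - 1))) * norm (dict_apply Phi (xs k))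
      \<le> sqrt (real m / (1 - babel Phi (m - 1))) * (2 * norm y)"
    using babel by (intro mult_left_mono) simp_all
  moreover have "l1norm (xs k) \<le> sqrt (real m / (1 - babel Phi (m - 1))) * norm (dict_apply Phi (xs k))"
    using l1norm_le_babel[OF unit supp _ m_le babel] sparse by (simp add: S_def)
  ultimately show "l1norm (xs k) \<le> 2 * norm y * sqrt (real m / (1 - babel Phi (m - 1)))"
    by (simp add: mult.commute)
qed

end
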